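(* Let $X$ be a real Banach space with property $(\mathcal{E}')$. Then: (i) for every $w^*$-dense and norm-closed linear subspace $Y\subset X^*$, the locally convex space $(X,\mu(X,Y))$ is complete if and only if $(Y,w^* )$ has the Mazur property; (ii) $X$ is fully Mackey complete if and only if $X$ is fully Mazur.
   Context: $X$ has property $(\mathcal{E}')$ if every convex, bounded, $w^*$-sequentially closed subset of $X^*$ is $w^*$-closed. $\mu(X,Y)$ is the Mackey topology on $X$ associated to $\langle X,Y\rangle$: uniform convergence on absolutely convex $w^*$-compact subsets of $Y$. $(Y,w^* )$ has the Mazur property if every $w^*$-sequentially continuous linear functional $f:Y\to\mathbb{R}$ is $w^*$-continuous. A linear subspace $Y\subset X^*$ is norming if $|||x|||=\sup\{x^*(x): x^*\in Y,\ \|x^*\|\le 1\}$ defines an equivalent norm on $X$. $X$ is fully Mackey complete if $(X,\mu(X,Y))$ is complete for every norming and norm-closed subspace $Y\subset X^*$; $X$ is fully Mazur if $(Y,w^* )$ has the Mazur property for every norming and norm-closed subspace $Y\subset X^*$. *)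

theory Defs
  imports "HOL-Analysis.Analysis"
begin

(* The dual space X-dual of a real Banach space X is modelled as the type
  of bounded linear functionals ('a \<Rightarrow>\<^sub>L real) with the operator norm. *)

definition weakstar :: "('a::real_normed_vector \<Rightarrow>\<^sub>L real) topology" where
  "weakstar = pullback_topology UNIV (\<lambda>y x. blinfun_apply y x)
               (product_topology (\<lambda>_. euclideanreal) UNIV)"

definition weakstar_seq_closed :: "('a::real_normed_vector \<Rightarrow>\<^sub>L real) set \<Rightarrow> bool" where
  "weakstar_seq_closed C \<longleftrightarrow>
     (\<forall>s y. (\<forall>n. s n \<in> C) \<and> limitin weakstar s y sequentially \<longrightarrow> y \<in> C)"

definition property_E' :: "'a::banach itself \<Rightarrow> bool" where
  "property_E' _ \<longleftrightarrow>
     (\<forall>C :: ('a \<Rightarrow>\<^sub>L real) set. convex C \<and> bounded C \<and> weakstar_seq_closed C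
        \<longrightarrow> closedin weakstar C)"

definition mackey_sets :: "('a::real_normed_vector \<Rightarrow>\<^sub>L real) set \<Rightarrow> ('a \<Rightarrow>\<^sub>L real) set set" where
  "mackey_sets Y = {K. K \<subseteq> Y \<and> convex K \<and> (\<forall>t y. \<bar>t\<bar> \<le> 1 \<and> y \<in> K \<longrightarrow> t *\<^sub>R y \<in> K)
                        \<and> compactin (subtopology weakstar Y) K}"

(* Cauchy filters and convergence for the Mackey topology \<mu>(X,Y)
  (uniform convergence on the sets in mackey_sets Y). *)
definition mackey_cauchy :: "('a::real_normed_vector \<Rightarrow>\<^sub>L real) set \<Rightarrow> 'a filter \<Rightarrow> bool" where
  "mackey_cauchy Y F \<longleftrightarrow>
     (\<forall>K\<in>mackey_sets Y. \<forall>e>0. \<forall>\<^sub>F (x, x') in F \<times>\<^sub>F F. \<forall>y\<in>K. \<bar>blinfun_apply y (x - x')\<bar> < e)"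

definition mackey_converges :: "('a::real_normed_vector \<Rightarrow>\<^sub>L real) set \<Rightarrow> 'a filter \<Rightarrow> 'a \<Rightarrow> bool" where
  "mackey_converges Y F x0 \<longleftrightarrow>
     (\<forall>K\<in>mackey_sets Y. \<forall>e>0. \<forall>\<^sub>F x in F. \<forall>y\<in>K. \<bar>blinfun_apply y (x - x0)\<bar> < e)"

definition mackey_complete :: "('a::real_normed_vector \<Rightarrow>\<^sub>L real) set \<Rightarrow> bool" where
  "mackey_complete Y \<longleftrightarrow>
     (\<forall>F. F \<noteq> bot \<and> mackey_cauchy Y F \<longrightarrow> (\<exists>x0. mackey_converges Y F x0))"

definition mazur :: "('a::real_normed_vector \<Rightarrow>\<^sub>L real) set \<Rightarrow> bool" where
  "mazur Y \<longleftrightarrow>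
     (\<forall>f :: ('a \<Rightarrow>\<^sub>L real) \<Rightarrow> real.
        (\<forall>a b y z. y \<in> Y \<and> z \<in> Y \<longrightarrow> f (a *\<^sub>R y + b *\<^sub>R z) = a * f y + b * f z)
        \<and> (\<forall>s y. (\<forall>n. s n \<in> Y) \<and> y \<in> Y \<and> limitin (subtopology weakstar Y) s y sequentially
                 \<longrightarrow> (\<lambda>n. f (s n)) \<longlonglongrightarrow> f y)
        \<longrightarrow> continuous_map (subtopology weakstar Y) euclideanreal f)"

(* Y is norming: |||x||| = sup {y x : y \<in> Y, \<parallel>y\<parallel> \<le> 1} is an equivalent norm
  (the bound |||x||| \<le> \<parallel>x\<parallel> is automatic). *)
definition norming :: "('a::real_normed_vector \<Rightarrow>\<^sub>L real) set \<Rightarrow> bool" where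
  "norming Y \<longleftrightarrow>
     (\<exists>c>0. \<forall>x. c * norm x \<le> (SUP y\<in>{y\<in>Y. norm y \<le> 1}. blinfun_apply y x))"

definition fully_mackey_complete :: "'a::banach itself \<Rightarrow> bool" where
  "fully_mackey_complete _ \<longleftrightarrow>
     (\<forall>Y :: ('a \<Rightarrow>\<^sub>L real) set. subspace Y \<and> norming Y \<and> closed Y \<longrightarrow> mackey_complete Y)"

definition fully_mazur :: "'a::banach itself \<Rightarrow> bool" where
  "fully_mazur _ \<longleftrightarrow>
     (\<forall>Y :: ('a \<Rightarrow>\<^sub>L real) set. subspace Y \<and> norming Y \<and> closed Y \<longrightarrow> mazur Y)"

end

theory Submission
  imports Defs
begin

text \<open>
  By Grothendieck's completeness criterion, \<open>(X, \<mu>(X,Y))\<close> is complete iff every linear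
  functional on \<open>Y\<close> that is weak-star continuous on each absolutely convex weak-star compact
  \<open>K \<subseteq> Y\<close> is the evaluation at a point of \<open>X\<close>. The Mazur property says the same about
  weak-star sequentially continuous functionals, because the weak-star continuous functionals
  on \<open>Y\<close> are exactly the evaluations. So it suffices that, for linear \<open>f\<close> on a closed
  subspace \<open>Y\<close>, the two continuity hypotheses agree. If \<open>f\<close> is sequentially continuous,
  the sets \<open>{y \<in> K. f y \<le> c}\<close> are convex, bounded and weak-star sequentially closed, hence
  weak-star closed by \<open>(\<E>')\<close>, so \<open>f\<close> is continuous on \<open>K\<close>. Conversely, a weak-star null
  sequence \<open>(z\<^sub>n)\<close> in \<open>Y\<close> lies in the absolutely convex weak-star compact set
  \<open>{\<Sum>n. a\<^sub>n z\<^sub>n | \<Sum>n. \<bar>a\<^sub>n\<bar> \<le> 1}\<close>, on which \<open>f\<close> is continuous.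
\<close>

section \<open>The weak-star topology\<close>

lemma weakstar_eq_strong_operator_topology: "weakstar = strong_operator_topology"
  unfolding weakstar_def strong_operator_topology_def euclidean_product_topology by simp

lemma topspace_weakstar [simp]: "topspace weakstar = UNIV"
  by (simp add: weakstar_eq_strong_operator_topology strong_operator_topology_topspace)

lemma continuous_map_weakstar_evaluation:
  "continuous_map weakstar euclideanreal (\<lambda>y. blinfun_apply y x)"
  by (simp add: weakstar_eq_strong_operator_topology strong_operator_topology_continuous_evaluation)

lemma continuous_map_weakstar_iff:
  "continuous_map T weakstar f \<longleftrightarrow> (\<forall>x. continuous_map T euclideanreal (\<lambda>t. blinfun_apply (f t) x))"
  by (simp add: weakstar_eq_strong_operator_topology continuous_on_strong_operator_topo_iff_coordinatewise)

lemma limitin_pullback_topology_UNIV: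
  "limitin (pullback_topology UNIV f T) s l F \<longleftrightarrow> limitin T (f \<circ> s) (f l) F"
proof
  assume "limitin (pullback_topology UNIV f T) s l F"
  moreover have "continuous_map (pullback_topology UNIV f T) T (id \<circ> f)"
    by (rule continuous_map_pullback) simp
  ultimately show "limitin T (f \<circ> s) (f l) F"
    using continuous_map_limit by fastforce
qed (auto simp: limitin_def openin_pullback_topology topspace_pullback_topology)

lemma limitin_weakstar_iff:
  "limitin weakstar s y F \<longleftrightarrow> (\<forall>x. ((\<lambda>n. blinfun_apply (s n) x) \<longlongrightarrow> blinfun_apply y x) F)"
  by (simp add: weakstar_def limitin_pullback_topology_UNIV limitin_componentwise o_def)

lemma Hausdorff_space_weakstar: "Hausdorff_space weakstar"
proof (rule Hausdorff_space_injective_preimage)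
  have "continuous_map weakstar (product_topology (\<lambda>_. euclideanreal) UNIV) (id \<circ> blinfun_apply)"
    unfolding weakstar_def by (rule continuous_map_pullback) simp
  then show "continuous_map weakstar (product_topology (\<lambda>_. euclideanreal) UNIV) blinfun_apply"
    by simp
qed (auto simp: Hausdorff_space_product_topology inj_on_def blinfun_eqI)

lemma weakstar_open_contains_annihilator_coset:
  assumes "openin weakstar U" "y0 \<in> U"
  obtains S where "finite S" "\<And>y. (\<forall>x\<in>S. blinfun_apply y x = blinfun_apply y0 x) \<Longrightarrow> y \<in> U"
proof -
  obtain V where V: "openin (product_topology (\<lambda>_. euclideanreal) UNIV) V"
      "U = blinfun_apply -` V"
    using assms(1) unfolding weakstar_def openin_pullback_topology by auto
  have "blinfun_apply y0 \<in> V"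
    using assms(2) V(2) by blast
  then obtain W where W: "finite {x. W x \<noteq> UNIV}" "blinfun_apply y0 \<in> PiE UNIV W" "PiE UNIV W \<subseteq> V"
    using V(1) unfolding openin_product_topology_alt by auto
  show thesis
  proof (rule that[OF W(1)])
    fix y assume "\<forall>x\<in>{x. W x \<noteq> UNIV}. blinfun_apply y x = blinfun_apply y0 x"
    then have "blinfun_apply y \<in> PiE UNIV W"
      using W(2) by (auto simp: PiE_iff) (metis UNIV_I)
    then show "y \<in> U"
      using W(3) V(2) by auto
  qed
qed

section \<open>Linear functionals on subspaces of the dual and evaluations\<close>

definition linear_functional_on :: "'v::real_vector set \<Rightarrow> ('v \<Rightarrow> real) \<Rightarrow> bool" where
  "linear_functional_on Y f \<longleftrightarrow>
     (\<forall>a b y z. y \<in> Y \<and> z \<in> Y \<longrightarrow> f (a *\<^sub>R y + b *\<^sub>R z) = a * f y + b * f z)"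

lemma linear_functional_onD:
  "linear_functional_on Y f \<Longrightarrow> y \<in> Y \<Longrightarrow> z \<in> Y \<Longrightarrow> f (a *\<^sub>R y + b *\<^sub>R z) = a * f y + b * f z"
  unfolding linear_functional_on_def by blast

lemma linear_functional_on_scaleR:
  "linear_functional_on Y f \<Longrightarrow> y \<in> Y \<Longrightarrow> f (a *\<^sub>R y) = a * f y"
  using linear_functional_onD[of Y f y y a 0] by simp

lemma linear_functional_on_diff:
  "linear_functional_on Y f \<Longrightarrow> y \<in> Y \<Longrightarrow> z \<in> Y \<Longrightarrow> f (y - z) = f y - f z"
  using linear_functional_onD[of Y f y z 1 "-1"] by simp

lemma linear_functional_on_zero:
  "linear_functional_on Y f \<Longrightarrow> y \<in> Y \<Longrightarrow> f 0 = 0"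
  using linear_functional_on_scaleR[of Y f y 0] by simp

lemma linear_functional_on_minus:
  "linear_functional_on Y f \<Longrightarrow> linear_functional_on Y (\<lambda>y. - f y)"
  unfolding linear_functional_on_def by simp

lemma linear_functional_on_diff_evaluation:
  "linear_functional_on Y f \<Longrightarrow> linear_functional_on Y (\<lambda>y. f y - c * blinfun_apply y x)"
  unfolding linear_functional_on_def by (simp add: blinfun.add_left blinfun.scaleR_left algebra_simps)

definition is_evaluation_on :: "('a::real_normed_vector \<Rightarrow>\<^sub>L real) set \<Rightarrow> (('a \<Rightarrow>\<^sub>L real) \<Rightarrow> real) \<Rightarrow> bool" where
  "is_evaluation_on Y f \<longleftrightarrow> (\<exists>x. \<forall>y\<in>Y. f y = blinfun_apply y x)"

lemma weakstar_small_on_annihilator: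
  assumes cont: "continuous_map (subtopology weakstar K) euclideanreal f"
    and "0 \<in> K" "f 0 = 0" "e > 0"
  obtains S where "finite S" "\<And>y. y \<in> K \<Longrightarrow> \<forall>x\<in>S. blinfun_apply y x = 0 \<Longrightarrow> \<bar>f y\<bar> < e"
proof -
  have "openin (subtopology weakstar K) {y \<in> topspace (subtopology weakstar K). f y \<in> ball 0 e}"
    by (rule openin_continuous_map_preimage[OF cont]) simp
  then obtain U where U: "openin weakstar U" "{y \<in> K. f y \<in> ball 0 e} = U \<inter> K"
    unfolding openin_subtopology by auto
  have "0 \<in> U"
    using U(2) assms(2-4) by (metis (mono_tags, lifting) Int_iff centre_in_ball mem_Collect_eq)
  then obtain S where S: "finite S" "\<And>y. \<forall>x\<in>S. blinfun_apply y x = 0 \<Longrightarrow> y \<in> U"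
    using weakstar_open_contains_annihilator_coset[OF U(1)] by (metis zero_blinfun.rep_eq)
  show thesis
  proof (rule that[OF S(1)])
    fix y assume "y \<in> K" "\<forall>x\<in>S. blinfun_apply y x = 0"
    then have "y \<in> {y \<in> K. f y \<in> ball 0 e}"
      using S(2) U(2) by blast
    then show "\<bar>f y\<bar> < e"
      by simp
  qed
qed

lemma symmetric_planar_set_in_strip:
  fixes D :: "(real \<times> real) set"
  assumes sym: "\<And>u t. (u, t) \<in> D \<Longrightarrow> (-u, -t) \<in> D"
    and axis: "\<And>u t v r l. (u, t) \<in> D \<Longrightarrow> (v, r) \<in> D \<Longrightarrow> 0 \<le> l \<Longrightarrow> l \<le> 1
                 \<Longrightarrow> l * u + (1 - l) * v = 0 \<Longrightarrow> l * t + (1 - l) * r \<le> \<eta>"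
  obtains c where "\<And>u t. (u, t) \<in> D \<Longrightarrow> \<bar>t - c * u\<bar> \<le> \<eta>"
proof -
  have slopes: "(r - \<eta>) / v \<le> (\<eta> - t) / (- u)"
    if "(u, t) \<in> D" "(v, r) \<in> D" "v > 0" "u < 0" for u t v r
  proof -
    define l where "l = v / (v - u)"
    have l: "0 \<le> l" "l \<le> 1" "l * u + (1 - l) * v = 0"
      using that by (auto simp: l_def field_simps)
    have lvu: "l * (v - u) = v"
      using that by (simp add: l_def)
    have "(l * t + (1 - l) * r) * (v - u) = t * (l * (v - u)) + r * ((v - u) - l * (v - u))"
      by (simp add: algebra_simps)
    also have "\<dots> = v * t - u * r"
      unfolding lvu by (simp add: algebra_simps)
    finally have "(l * t + (1 - l) * r) * (v - u) = v * t - u * r" .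
    with axis[OF that(1,2) l] that(3,4) have "v * t - u * r \<le> \<eta> * (v - u)"
      by (metis diff_gt_0_iff_gt less_trans mult_right_mono nless_le)
    then show ?thesis
      using that by (simp add: field_simps)
  qed
  define P where "P = {(r - \<eta>) / v | v r. (v, r) \<in> D \<and> v > 0}"
  define c where "c = (if P = {} then 0 else Sup P)"
  have upper: "t \<le> \<eta> + c * u" if "(u, t) \<in> D" for u t
  proof -
    consider "u = 0" | "u > 0" | "u < 0" by linarith
    then show ?thesis
    proof cases
      case 1
      then show ?thesis using axis[OF that that, of 1] by simp
    next
      case 2
      have "bdd_above P"
        unfolding bdd_above_def P_def using slopes[OF sym[OF that]] 2 by auto
      moreover have "(t - \<eta>) / u \<in> P" using that 2 by (auto simp: P_def)
      ultimately have "(t - \<eta>) / u \<le> c" by (auto simp: c_def intro: cSup_upper)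
      then show ?thesis using 2 by (simp add: field_simps)
    next
      case 3
      have ne: "P \<noteq> {}" using sym[OF that] 3 by (auto simp: P_def)
      have "Sup P \<le> (\<eta> - t) / (- u)"
        using slopes[OF that _ _ 3] by (intro cSup_least[OF ne]) (auto simp: P_def)
      then show ?thesis using ne 3 by (simp add: c_def field_simps)
    qed
  qed
  show thesis
  proof (rule that)
    fix u t assume "(u, t) \<in> D"
    then show "\<bar>t - c * u\<bar> \<le> \<eta>"
      using upper[of u t] upper[OF sym] by (fastforce simp: abs_le_iff)
  qed
qed

lemma approx_evaluation_from_annihilator_bound:
  assumes "finite S" and KY: "K \<subseteq> Y" and convex: "convex K" and sym: "\<And>y. y \<in> K \<Longrightarrow> - y \<in> K"
    and "linear_functional_on Y f" and "\<forall>y\<in>K. (\<forall>x\<in>S. blinfun_apply y x = 0) \<longrightarrow> \<bar>f y\<bar> \<le> \<eta>"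
  shows "\<exists>x0. \<forall>y\<in>K. \<bar>f y - blinfun_apply y x0\<bar> \<le> \<eta>"
  using assms(1,5,6)
proof (induction S arbitrary: f rule: finite_induct)
  case empty
  then show ?case by (intro exI[of _ 0]) simp
next
  case (insert s S)
  note lin = insert.prems(1)
  define K' where "K' = {y \<in> K. \<forall>x\<in>S. blinfun_apply y x = 0}"
  (* The coefficient of the new point s comes from a separation in the plane of the values
     (y s, f y) on the part of K annihilated by S. *)
  define D where "D = (\<lambda>y. (blinfun_apply y s, f y)) ` K'"
  have sym_D: "(- u, - t) \<in> D" if ut: "(u, t) \<in> D" for u t
  proof -
    obtain y where y: "y \<in> K'" "u = blinfun_apply y s" "t = f y"
      using ut by (auto simp: D_def)
    moreover have "f (- y) = - f y"
      using linear_functional_on_scaleR[OF lin, of y "-1"] y(1) KY by (auto simp: K'_def)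
    moreover have "- y \<in> K'"
      using y(1) sym by (auto simp: K'_def blinfun.minus_left)
    ultimately show "(- u, - t) \<in> D"
      by (auto simp: D_def blinfun.minus_left image_iff intro!: bexI[of _ "- y"])
  qed
  have axis_D: "l * t + (1 - l) * r \<le> \<eta>"
    if ut: "(u, t) \<in> D" and vr: "(v, r) \<in> D" and l: "0 \<le> l" "l \<le> 1" and axis: "l * u + (1 - l) * v = 0"
    for u t v r l
  proof -
    obtain y1 y2 where y: "y1 \<in> K'" "u = blinfun_apply y1 s" "t = f y1"
        "y2 \<in> K'" "v = blinfun_apply y2 s" "r = f y2"
      using ut vr by (auto simp: D_def)
    define w where "w = l *\<^sub>R y1 + (1 - l) *\<^sub>R y2"
    have "w \<in> K"
      using y(1,4) l convex by (auto simp: K'_def w_def intro!: convexD)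
    moreover have "\<forall>x\<in>insert s S. blinfun_apply w x = 0"
      using y axis by (auto simp: K'_def w_def blinfun.add_left blinfun.scaleR_left)
    ultimately have "\<bar>f w\<bar> \<le> \<eta>"
      using insert.prems(2) by blast
    moreover have "f w = l * t + (1 - l) * r"
      using linear_functional_onD[OF lin, of y1 y2 l "1 - l"] y KY by (auto simp: K'_def w_def)
    ultimately show "l * t + (1 - l) * r \<le> \<eta>"
      by simp
  qed
  obtain c where c: "\<And>u t. (u, t) \<in> D \<Longrightarrow> \<bar>t - c * u\<bar> \<le> \<eta>"
    using symmetric_planar_set_in_strip[of D \<eta>] sym_D axis_D by blast
  define f' where "f' y = f y - c * blinfun_apply y s" for y
  have "\<forall>y\<in>K. (\<forall>x\<in>S. blinfun_apply y x = 0) \<longrightarrow> \<bar>f' y\<bar> \<le> \<eta>"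
    using c by (auto simp: f'_def D_def K'_def)
  then obtain x1 where x1: "\<forall>y\<in>K. \<bar>f' y - blinfun_apply y x1\<bar> \<le> \<eta>"
    using insert.IH linear_functional_on_diff_evaluation[OF lin] unfolding f'_def by blast
  show ?case
    by (intro exI[of _ "x1 + c *\<^sub>R s"])
       (use x1 in \<open>auto simp: f'_def blinfun.add_right blinfun.scaleR_right algebra_simps\<close>)
qed

lemma approx_evaluation_on_weakstar_continuous:
  assumes KY: "K \<subseteq> Y" and convex: "convex K" and sym: "\<And>y. y \<in> K \<Longrightarrow> - y \<in> K"
    and lin: "linear_functional_on Y f"
    and cont: "continuous_map (subtopology weakstar K) euclideanreal f" and "e > 0"
  obtains x where "\<And>y. y \<in> K \<Longrightarrow> \<bar>f y - blinfun_apply y x\<bar> \<le> e"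
proof (cases "K = {}")
  case False
  then obtain y where y: "y \<in> K" by blast
  have "0 = (1/2) *\<^sub>R y + (1/2) *\<^sub>R (- y)"
    by simp
  also have "\<dots> \<in> K"
    by (rule convexD[OF convex y sym[OF y]]) simp_all
  finally have "0 \<in> K" .
  moreover have "f 0 = 0"
    using linear_functional_on_zero[OF lin] y KY by blast
  ultimately obtain S where "finite S" "\<And>y. y \<in> K \<Longrightarrow> \<forall>x\<in>S. blinfun_apply y x = 0 \<Longrightarrow> \<bar>f y\<bar> < e"
    using weakstar_small_on_annihilator[OF cont _ _ \<open>e > 0\<close>] by blast
  then show thesis
    using approx_evaluation_from_annihilator_bound[OF _ KY convex sym lin, of S e] that
    by (meson less_imp_le)
qed (use that in simp)

lemma is_evaluation_on_if_weakstar_continuous: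
  assumes Y: "subspace Y" and lin: "linear_functional_on Y f"
    and cont: "continuous_map (subtopology weakstar Y) euclideanreal f"
  shows "is_evaluation_on Y f"
proof -
  obtain x where x: "\<And>y. y \<in> Y \<Longrightarrow> \<bar>f y - blinfun_apply y x\<bar> \<le> 1"
    using approx_evaluation_on_weakstar_continuous[OF subset_refl subspace_imp_convex[OF Y]
        subspace_neg[OF Y] lin cont zero_less_one] by blast
  have "f y = blinfun_apply y x" if y: "y \<in> Y" for y
  proof (rule ccontr)
    define d where "d = f y - blinfun_apply y x"
    assume "f y \<noteq> blinfun_apply y x"
    then have "d \<noteq> 0" by (simp add: d_def)
    have "(2 / d) *\<^sub>R y \<in> Y"
      using Y y by (simp add: subspace_scale)
    moreover have "f ((2 / d) *\<^sub>R y) - blinfun_apply ((2 / d) *\<^sub>R y) x = (2 / d) * d"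
      using linear_functional_on_scaleR[OF lin y]
      by (simp add: d_def blinfun.scaleR_left right_diff_distrib)
    ultimately show False
      using x \<open>d \<noteq> 0\<close> by fastforce
  qed
  then show ?thesis
    unfolding is_evaluation_on_def by blast
qed

lemma weakstar_continuous_if_is_evaluation_on:
  assumes "is_evaluation_on Y f"
  shows "continuous_map (subtopology weakstar Y) euclideanreal f"
proof -
  obtain x where "\<forall>y\<in>Y. f y = blinfun_apply y x"
    using assms unfolding is_evaluation_on_def by blast
  then show ?thesis
    using continuous_map_eq[OF continuous_map_from_subtopology[OF continuous_map_weakstar_evaluation]]
    by (metis topspace_subtopology_subset topspace_weakstar top_greatest)
qed

definition weakstar_seq_continuous_on ::
    "('a::real_normed_vector \<Rightarrow>\<^sub>L real) set \<Rightarrow> (('a \<Rightarrow>\<^sub>L real) \<Rightarrow> real) \<Rightarrow> bool" where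
  "weakstar_seq_continuous_on Y f \<longleftrightarrow>
     (\<forall>s y. (\<forall>n. s n \<in> Y) \<and> y \<in> Y \<and> limitin (subtopology weakstar Y) s y sequentially
            \<longrightarrow> (\<lambda>n. f (s n)) \<longlonglongrightarrow> f y)"

lemma mazur_iff_is_evaluation_on:
  assumes "subspace Y"
  shows "mazur Y \<longleftrightarrow>
    (\<forall>f. linear_functional_on Y f \<and> weakstar_seq_continuous_on Y f \<longrightarrow> is_evaluation_on Y f)"
  using assms is_evaluation_on_if_weakstar_continuous weakstar_continuous_if_is_evaluation_on
  unfolding mazur_def linear_functional_on_def weakstar_seq_continuous_on_def by blast

section \<open>Uniform boundedness\<close>

lemma pointwise_bounded_bounded_on_ball:
  fixes A :: "('a::banach \<Rightarrow>\<^sub>L real) set"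
  assumes pointwise: "\<And>x. \<exists>M. \<forall>a\<in>A. \<bar>blinfun_apply a x\<bar> \<le> M"
  shows "\<exists>x0 r k. r > 0 \<and> (\<forall>a\<in>A. \<forall>x\<in>ball x0 r. \<bar>blinfun_apply a x\<bar> \<le> k)"
proof -
  define F where "F k = {x::'a. \<forall>a\<in>A. \<bar>blinfun_apply a x\<bar> \<le> real k}" for k :: nat
  have closed_F: "closed (F k)" for k
  proof -
    have "F k = (\<Inter>a\<in>A. {x. \<bar>blinfun_apply a x\<bar> \<le> real k})"
      by (auto simp: F_def)
    then show ?thesis
      by (auto intro!: closed_INT closed_Collect_le continuous_intros)
  qed
  have cover: "UNIV = \<Union>(range F)"
  proof (rule UNIV_eq_I)
    fix x
    obtain M where M: "\<forall>a\<in>A. \<bar>blinfun_apply a x\<bar> \<le> M"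
      using pointwise by blast
    have "x \<in> F (nat \<lceil>M\<rceil>)"
      using order_trans[OF bspec[OF M] real_nat_ceiling_ge] by (simp add: F_def)
    then show "x \<in> \<Union>(range F)"
      by blast
  qed
  have "\<exists>k. interior (F k) \<noteq> {}"
  proof (rule ccontr)
    assume "\<nexists>k. interior (F k) \<noteq> {}"
    then have "euclidean interior_of \<Union>(range F) = {}"
      using closed_F completely_metrizable_space_euclidean
      by (intro Baire_category_alt) auto
    with cover show False
      by simp
  qed
  then obtain k x0 where "x0 \<in> interior (F k)"
    by blast
  then obtain r where r: "r > 0" "ball x0 r \<subseteq> F k"
    by (meson interior_subset open_contains_ball open_interior order_trans)
  then show ?thesis
    unfolding F_def by blast
qed

lemma bounded_if_pointwise_bounded:
  fixes A :: "('a::banach \<Rightarrow>\<^sub>L real) set"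
  assumes "\<And>x. \<exists>M. \<forall>a\<in>A. \<bar>blinfun_apply a x\<bar> \<le> M"
  shows "bounded A"
proof -
  obtain x0 r k where r: "r > 0" and k: "\<forall>a\<in>A. \<forall>x\<in>ball x0 r. \<bar>blinfun_apply a x\<bar> \<le> k"
    using pointwise_bounded_bounded_on_ball[OF assms] by blast
  have "norm a \<le> 4 * k / r" if a: "a \<in> A" for a
  proof (rule norm_blinfun_bound)
    have ball: "\<bar>blinfun_apply a x\<bar> \<le> k" if "x \<in> ball x0 r" for x
      using k a that by blast
    show "0 \<le> 4 * k / r"
      using ball[of x0] r by simp
    show "norm (blinfun_apply a z) \<le> 4 * k / r * norm z" for z
    proof (cases "z = 0")
      case False
      define c where "c = r / 2 / norm z"
      have "norm (c *\<^sub>R z) < r"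
        using False r by (simp add: c_def)
      then have "\<bar>blinfun_apply a (x0 + c *\<^sub>R z) - blinfun_apply a x0\<bar> \<le> 2 * k"
        using ball[of x0] ball[of "x0 + c *\<^sub>R z"] r by (simp add: dist_norm)
      then have "c * \<bar>blinfun_apply a z\<bar> \<le> 2 * k"
        using False r by (simp add: c_def blinfun.add_right blinfun.scaleR_right abs_mult)
      then show ?thesis
        using False r by (simp add: c_def field_simps)
    qed simp
  qed
  then show ?thesis
    unfolding bounded_iff by blast
qed

section \<open>Mackey sets\<close>

lemma mackey_setsD:
  assumes "K \<in> mackey_sets Y"
  shows "K \<subseteq> Y" "convex K" "\<And>t y. \<bar>t\<bar> \<le> 1 \<Longrightarrow> y \<in> K \<Longrightarrow> t *\<^sub>R y \<in> K"
    "compactin weakstar K"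
  using assms by (auto simp: mackey_sets_def compactin_subtopology)

lemma mackey_sets_uminus: "K \<in> mackey_sets Y \<Longrightarrow> y \<in> K \<Longrightarrow> - y \<in> K"
  using mackey_setsD(3)[of K Y "-1" y] by simp

lemma closedin_weakstar_mackey_sets: "K \<in> mackey_sets Y \<Longrightarrow> closedin weakstar K"
  by (rule compactin_imp_closedin[OF Hausdorff_space_weakstar mackey_setsD(4)])

lemma bounded_mackey_sets:
  fixes K :: "('a::banach \<Rightarrow>\<^sub>L real) set"
  assumes "K \<in> mackey_sets Y"
  shows "bounded K"
proof (rule bounded_if_pointwise_bounded)
  fix x
  have "compactin euclideanreal ((\<lambda>y. blinfun_apply y x) ` K)"
    by (rule image_compactin[OF mackey_setsD(4)[OF assms] continuous_map_weakstar_evaluation])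
  then have "bounded ((\<lambda>y. blinfun_apply y x) ` K)"
    by (simp add: compact_imp_bounded)
  then obtain M where "\<forall>t\<in>(\<lambda>y. blinfun_apply y x) ` K. norm t \<le> M"
    unfolding bounded_iff by blast
  then show "\<exists>M. \<forall>a\<in>K. \<bar>blinfun_apply a x\<bar> \<le> M"
    by auto
qed

lemma mackey_sets_segment:
  assumes Y: "subspace Y" and y: "y \<in> Y"
  shows "(\<lambda>t. t *\<^sub>R y) ` {-1..1} \<in> mackey_sets Y"
  unfolding mackey_sets_def
proof (intro CollectI conjI allI impI)
  show "(\<lambda>t. t *\<^sub>R y) ` {-1..1} \<subseteq> Y"
    using Y y by (auto simp: subspace_scale)
  show "convex ((\<lambda>t. t *\<^sub>R y) ` {-1..1})"
    by (rule convex_linear_image) (auto intro: linear_scaleR_left)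
  fix t :: real and z assume "\<bar>t\<bar> \<le> 1 \<and> z \<in> (\<lambda>t. t *\<^sub>R y) ` {-1..1}"
  then obtain s where "\<bar>t\<bar> \<le> 1" "\<bar>s\<bar> \<le> 1" "z = s *\<^sub>R y"
    by (auto simp: abs_le_iff)
  moreover from this have "\<bar>t * s\<bar> \<le> 1"
    by (simp add: abs_mult mult_le_one)
  ultimately show "t *\<^sub>R z \<in> (\<lambda>t. t *\<^sub>R y) ` {-1..1}"
    by (auto simp: image_iff abs_le_iff intro!: bexI[of _ "t * s"])
next
  have "continuous_map euclideanreal weakstar (\<lambda>t. t *\<^sub>R y)"
    unfolding continuous_map_weakstar_iff by (simp add: blinfun.scaleR_left continuous_intros)
  then have "compactin weakstar ((\<lambda>t. t *\<^sub>R y) ` {-1..1})"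
    by (rule image_compactin[rotated]) simp
  then show "compactin (subtopology weakstar Y) ((\<lambda>t. t *\<^sub>R y) ` {-1..1})"
    using Y y by (auto simp: compactin_subtopology subspace_scale)
qed

lemma mackey_sets_insert_zero:
  assumes K: "K \<in> mackey_sets Y" and Y: "subspace Y"
  shows "insert 0 K \<in> mackey_sets Y"
proof (cases "K = {}")
  case True
  then show ?thesis
    using subspace_0[OF Y] by (simp add: mackey_sets_def)
next
  case False
  then obtain y where "y \<in> K" by blast
  then have "0 \<in> K"
    using mackey_setsD(3)[OF K, of 0] by simp
  then show ?thesis
    using K by (simp add: insert_absorb)
qed

lemma mackey_sets_plus:
  assumes K1: "K1 \<in> mackey_sets Y" and K2: "K2 \<in> mackey_sets Y" and Y: "subspace Y"
  shows "K1 + K2 \<in> mackey_sets Y"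
proof -
  have sub: "K1 + K2 \<subseteq> Y"
    using mackey_setsD(1)[OF K1] mackey_setsD(1)[OF K2]
    by (auto simp: set_plus_def intro!: subspace_add[OF Y])
  have "continuous_map (prod_topology weakstar weakstar) weakstar (\<lambda>(a, b). a + b)"
    unfolding continuous_map_weakstar_iff case_prod_unfold blinfun.add_left
    by (intro allI continuous_map_add continuous_map_compose[OF continuous_map_fst, unfolded o_def]
        continuous_map_compose[OF continuous_map_snd, unfolded o_def] continuous_map_weakstar_evaluation)
  moreover have "compactin (prod_topology weakstar weakstar) (K1 \<times> K2)"
    using mackey_setsD(4)[OF K1] mackey_setsD(4)[OF K2] by (simp add: compactin_Times)
  ultimately have "compactin weakstar (K1 + K2)"
    unfolding set_plus_image by (rule image_compactin[rotated])
  moreover have "t *\<^sub>R y \<in> K1 + K2" if "\<bar>t\<bar> \<le> 1" "y \<in> K1 + K2" for t y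
    using that mackey_setsD(3)[OF K1] mackey_setsD(3)[OF K2]
    by (auto simp: set_plus_def scaleR_right_distrib) blast
  moreover have "convex (K1 + K2)"
    by (intro convex_set_plus mackey_setsD(2)[OF K1] mackey_setsD(2)[OF K2])
  ultimately show ?thesis
    using sub by (simp add: mackey_sets_def compactin_subtopology)
qed

lemma mackey_sets_directed:
  assumes "K1 \<in> mackey_sets Y" "K2 \<in> mackey_sets Y" "subspace Y"
  obtains K where "K \<in> mackey_sets Y" "K1 \<subseteq> K" "K2 \<subseteq> K"
proof
  show "insert 0 K1 + insert 0 K2 \<in> mackey_sets Y"
    using assms by (intro mackey_sets_plus mackey_sets_insert_zero)
  show "K1 \<subseteq> insert 0 K1 + insert 0 K2" "K2 \<subseteq> insert 0 K1 + insert 0 K2"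
    by (force simp: set_plus_def)+
qed

section \<open>Grothendieck's completeness criterion\<close>

definition continuous_on_mackey_sets ::
    "('a::real_normed_vector \<Rightarrow>\<^sub>L real) set \<Rightarrow> (('a \<Rightarrow>\<^sub>L real) \<Rightarrow> real) \<Rightarrow> bool" where
  "continuous_on_mackey_sets Y f \<longleftrightarrow>
     (\<forall>K\<in>mackey_sets Y. continuous_map (subtopology weakstar K) euclideanreal f)"

lemma mackey_cauchy_evaluation_convergent:
  assumes F: "F \<noteq> bot" and cauchy: "mackey_cauchy Y F" and Y: "subspace Y" and y: "y \<in> Y"
  obtains l where "((\<lambda>x. blinfun_apply y x) \<longlongrightarrow> l) F"
proof -
  have "cauchy_filter (filtermap (\<lambda>x. blinfun_apply y x) F)"
    unfolding cauchy_filter_metric_filtermap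
  proof (intro allI impI)
    fix e :: real assume "e > 0"
    then have "\<forall>\<^sub>F (x, x') in F \<times>\<^sub>F F. \<forall>z\<in>(\<lambda>t. t *\<^sub>R y) ` {-1..1}. \<bar>blinfun_apply z (x - x')\<bar> < e"
      using cauchy mackey_sets_segment[OF Y y] unfolding mackey_cauchy_def by blast
    moreover have "y \<in> (\<lambda>t. t *\<^sub>R y) ` {-1..1}"
      by (rule image_eqI[of _ _ 1]) simp_all
    ultimately show "\<exists>P. eventually P F \<and> (\<forall>x x'. P x \<and> P x' \<longrightarrow>
                        dist (blinfun_apply y x) (blinfun_apply y x') < e)"
      unfolding eventually_prod_same by (fastforce simp: dist_real_def blinfun.diff_right)
  qed
  moreover have "filtermap (\<lambda>x. blinfun_apply y x) F \<noteq> bot"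
    using F by (simp add: filtermap_bot_iff)
  ultimately obtain l where "filtermap (\<lambda>x. blinfun_apply y x) F \<le> nhds l"
    using cauchy_filter_complete_converges[OF _ complete_UNIV] by auto
  then show thesis
    using that unfolding filterlim_def by blast
qed

lemma mackey_cauchy_uniform_limit:
  assumes F: "F \<noteq> bot" and cauchy: "mackey_cauchy Y F" and Y: "subspace Y"
  obtains f where "linear_functional_on Y f"
    "\<And>K e. K \<in> mackey_sets Y \<Longrightarrow> e > 0 \<Longrightarrow> \<forall>\<^sub>F x in F. \<forall>y\<in>K. \<bar>blinfun_apply y x - f y\<bar> < e"
proof
  define f where "f y = Lim F (\<lambda>x. blinfun_apply y x)" for y :: "'a \<Rightarrow>\<^sub>L real"
  have lim: "((\<lambda>x. blinfun_apply y x) \<longlongrightarrow> f y) F" if "y \<in> Y" for y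
    using mackey_cauchy_evaluation_convergent[OF F cauchy Y that]
    by (metis F f_def tendsto_Lim)
  show "linear_functional_on Y f"
    unfolding linear_functional_on_def
  proof (intro allI impI)
    fix a b y z assume yz: "y \<in> Y \<and> z \<in> Y"
    then have "((\<lambda>x. blinfun_apply (a *\<^sub>R y + b *\<^sub>R z) x) \<longlongrightarrow> f (a *\<^sub>R y + b *\<^sub>R z)) F"
      using Y by (intro lim subspace_add subspace_scale) auto
    moreover have "((\<lambda>x. blinfun_apply (a *\<^sub>R y + b *\<^sub>R z) x) \<longlongrightarrow> a * f y + b * f z) F"
      unfolding blinfun.add_left blinfun.scaleR_left using yz by (auto intro!: tendsto_intros lim)
    ultimately show "f (a *\<^sub>R y + b *\<^sub>R z) = a * f y + b * f z"
      using tendsto_unique[OF F] by blast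
  qed
  fix K and e :: real assume K: "K \<in> mackey_sets Y" and "e > 0"
  then have "\<forall>\<^sub>F (x, x') in F \<times>\<^sub>F F. \<forall>y\<in>K. \<bar>blinfun_apply y (x - x')\<bar> < e / 2"
    using cauchy half_gt_zero unfolding mackey_cauchy_def by blast
  then obtain P where P: "eventually P F"
      "\<And>x x'. P x \<Longrightarrow> P x' \<Longrightarrow> \<forall>y\<in>K. \<bar>blinfun_apply y x - blinfun_apply y x'\<bar> < e / 2"
    unfolding eventually_prod_same by (auto simp: blinfun.diff_right)
  have "\<bar>blinfun_apply y x - f y\<bar> \<le> e / 2" if "P x" "y \<in> K" for x y
  proof (rule tendsto_upperbound[OF _ _ F])
    show "((\<lambda>x'. \<bar>blinfun_apply y x - blinfun_apply y x'\<bar>) \<longlongrightarrow> \<bar>blinfun_apply y x - f y\<bar>) F"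
      using mackey_setsD(1)[OF K] that(2) by (intro tendsto_intros lim) auto
    show "\<forall>\<^sub>F x' in F. \<bar>blinfun_apply y x - blinfun_apply y x'\<bar> \<le> e / 2"
      using P that by (auto elim!: eventually_mono intro: less_imp_le)
  qed
  then show "\<forall>\<^sub>F x in F. \<forall>y\<in>K. \<bar>blinfun_apply y x - f y\<bar> < e"
    using P(1) \<open>e > 0\<close> by (force elim!: eventually_mono)
qed

lemma weakstar_continuous_if_uniform_limit_of_evaluations:
  assumes "F \<noteq> bot"
    and "\<And>e. e > 0 \<Longrightarrow> \<forall>\<^sub>F x in F. \<forall>y\<in>K. \<bar>blinfun_apply y x - f y\<bar> < e"
  shows "continuous_map (subtopology weakstar K) euclideanreal f"
proof (rule Met_TC.continuous_map_uniform_limit[where f = "\<lambda>x y. blinfun_apply y x", simplified])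
  show "\<forall>\<^sub>F x in F. continuous_map (subtopology weakstar K) euclideanreal (\<lambda>y. blinfun_apply y x)"
    by (simp add: continuous_map_from_subtopology[OF continuous_map_weakstar_evaluation])
  show "\<forall>\<^sub>F x in F. \<forall>y\<in>topspace (subtopology weakstar K). dist (blinfun_apply y x) (f y) < e"
    if "e > 0" for e
    using assms(2)[OF that] by (simp add: dist_real_def)
qed (use assms(1) in simp)

lemma mackey_complete_if_evaluations:
  assumes Y: "subspace Y"
    and eval: "\<And>f. linear_functional_on Y f \<Longrightarrow> continuous_on_mackey_sets Y f \<Longrightarrow> is_evaluation_on Y f"
  shows "mackey_complete Y"
  unfolding mackey_complete_def
proof (intro allI impI)
  fix F :: "'a filter" assume "F \<noteq> bot \<and> mackey_cauchy Y F"
  then have F: "F \<noteq> bot" and cauchy: "mackey_cauchy Y F" by auto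
  obtain f where lin: "linear_functional_on Y f" and unif:
    "\<And>K e. K \<in> mackey_sets Y \<Longrightarrow> e > 0 \<Longrightarrow> \<forall>\<^sub>F x in F. \<forall>y\<in>K. \<bar>blinfun_apply y x - f y\<bar> < e"
    using mackey_cauchy_uniform_limit[OF F cauchy Y] by blast
  have "continuous_on_mackey_sets Y f"
    unfolding continuous_on_mackey_sets_def
    using weakstar_continuous_if_uniform_limit_of_evaluations[OF F unif] by blast
  then obtain x0 where x0: "\<forall>y\<in>Y. f y = blinfun_apply y x0"
    using eval[OF lin] unfolding is_evaluation_on_def by blast
  have "mackey_converges Y F x0"
    unfolding mackey_converges_def
  proof (intro ballI allI impI)
    fix K and e :: real assume K: "K \<in> mackey_sets Y" and "e > 0"
    with unif show "\<forall>\<^sub>F x in F. \<forall>y\<in>K. \<bar>blinfun_apply y (x - x0)\<bar> < e"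
      using mackey_setsD(1)[OF K] x0 by (force simp: blinfun.diff_right elim!: eventually_mono)
  qed
  then show "\<exists>x0. mackey_converges Y F x0" ..
qed

(* Completeness applied to this Mackey-Cauchy filter yields the point representing f. *)
definition mackey_approx_filter ::
    "('a::real_normed_vector \<Rightarrow>\<^sub>L real) set \<Rightarrow> (('a \<Rightarrow>\<^sub>L real) \<Rightarrow> real) \<Rightarrow> 'a filter" where
  "mackey_approx_filter Y f =
     (INF (K, e)\<in>mackey_sets Y \<times> {0<..}. principal {x. \<forall>y\<in>K. \<bar>f y - blinfun_apply y x\<bar> < e})"

lemma eventually_mackey_approx_filter:
  assumes Y: "subspace Y"
  shows "eventually P (mackey_approx_filter Y f) \<longleftrightarrow>
    (\<exists>K\<in>mackey_sets Y. \<exists>e>0. \<forall>x. (\<forall>y\<in>K. \<bar>f y - blinfun_apply y x\<bar> < e) \<longrightarrow> P x)"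
proof -
  let ?A = "\<lambda>b. {x. \<forall>y\<in>fst b. \<bar>f y - blinfun_apply y x\<bar> < snd b}"
  have "mackey_approx_filter Y f = (INF b\<in>mackey_sets Y \<times> {0<..}. principal (?A b))"
    by (simp add: mackey_approx_filter_def case_prod_unfold)
  also have "eventually P \<dots> \<longleftrightarrow> (\<exists>b\<in>mackey_sets Y \<times> {0<..}. eventually P (principal (?A b)))"
  proof (rule eventually_INF_base)
    have "({}, 1) \<in> mackey_sets Y \<times> {0::real<..}"
      by (simp add: mackey_sets_def)
    then show "mackey_sets Y \<times> {0::real<..} \<noteq> {}"
      by blast
  next
    fix a b assume "a \<in> mackey_sets Y \<times> {0::real<..}" "b \<in> mackey_sets Y \<times> {0::real<..}"
    then obtain K1 e1 K2 e2 where "a = (K1, e1)" "b = (K2, e2)" "K1 \<in> mackey_sets Y" "K2 \<in> mackey_sets Y"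
        "e1 > 0" "e2 > 0"
      by auto
    moreover obtain K where "K \<in> mackey_sets Y" "K1 \<subseteq> K" "K2 \<subseteq> K"
      using mackey_sets_directed[OF calculation(3,4) Y] .
    ultimately show "\<exists>c\<in>mackey_sets Y \<times> {0<..}. principal (?A c) \<le> inf (principal (?A a)) (principal (?A b))"
      by (intro bexI[of _ "(K, min e1 e2)"]) auto
  qed
  finally show ?thesis
    by (auto simp: eventually_principal)
qed

lemma eventually_mackey_approx_filter_approx:
  assumes "subspace Y" "K \<in> mackey_sets Y" "e > 0"
  shows "\<forall>\<^sub>F x in mackey_approx_filter Y f. \<forall>y\<in>K. \<bar>f y - blinfun_apply y x\<bar> < e"
  using assms unfolding eventually_mackey_approx_filter[OF assms(1)] by blast

lemma mackey_approx_filter_neq_bot: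
  assumes Y: "subspace Y" and lin: "linear_functional_on Y f" and cont: "continuous_on_mackey_sets Y f"
  shows "mackey_approx_filter Y f \<noteq> bot"
proof
  assume "mackey_approx_filter Y f = bot"
  then have "\<forall>\<^sub>F _ in mackey_approx_filter Y f. False"
    by simp
  then obtain K e where K: "K \<in> mackey_sets Y" and "e > 0"
      and empty: "\<And>x. \<not> (\<forall>y\<in>K. \<bar>f y - blinfun_apply y x\<bar> < e)"
    unfolding eventually_mackey_approx_filter[OF Y] by blast
  obtain x where "\<And>y. y \<in> K \<Longrightarrow> \<bar>f y - blinfun_apply y x\<bar> \<le> e / 2"
    using approx_evaluation_on_weakstar_continuous[OF mackey_setsD(1,2)[OF K] mackey_sets_uminus[OF K] lin]
      cont K \<open>e > 0\<close> unfolding continuous_on_mackey_sets_def by (metis half_gt_zero)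
  with empty[of x] \<open>e > 0\<close> show False
    by fastforce
qed

lemma mackey_cauchy_approx_filter:
  assumes Y: "subspace Y"
  shows "mackey_cauchy Y (mackey_approx_filter Y f)"
  unfolding mackey_cauchy_def
proof (intro ballI allI impI)
  fix K and e :: real assume "K \<in> mackey_sets Y" "e > 0"
  then have "\<forall>\<^sub>F x in mackey_approx_filter Y f. \<forall>y\<in>K. \<bar>f y - blinfun_apply y x\<bar> < e / 2"
    by (intro eventually_mackey_approx_filter_approx[OF Y]) simp_all
  moreover have "\<forall>y\<in>K. \<bar>blinfun_apply y (x - x')\<bar> < e"
    if "\<forall>y\<in>K. \<bar>f y - blinfun_apply y x\<bar> < e / 2" "\<forall>y\<in>K. \<bar>f y - blinfun_apply y x'\<bar> < e / 2"
    for x x'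
  proof
    fix y assume "y \<in> K"
    with that have "\<bar>f y - blinfun_apply y x\<bar> < e / 2" "\<bar>f y - blinfun_apply y x'\<bar> < e / 2"
      by blast+
    then show "\<bar>blinfun_apply y (x - x')\<bar> < e"
      unfolding blinfun.diff_right by arith
  qed
  ultimately show "\<forall>\<^sub>F (x, x') in mackey_approx_filter Y f \<times>\<^sub>F mackey_approx_filter Y f.
               \<forall>y\<in>K. \<bar>blinfun_apply y (x - x')\<bar> < e"
    unfolding eventually_prod_same by blast
qed

lemma is_evaluation_on_if_mackey_complete:
  assumes Y: "subspace Y" and complete: "mackey_complete Y"
    and lin: "linear_functional_on Y f" and cont: "continuous_on_mackey_sets Y f"
  shows "is_evaluation_on Y f"
proof -
  let ?F = "mackey_approx_filter Y f"
  have F: "?F \<noteq> bot"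
    by (rule mackey_approx_filter_neq_bot[OF Y lin cont])
  obtain x0 where x0: "mackey_converges Y ?F x0"
    using complete F mackey_cauchy_approx_filter[OF Y] unfolding mackey_complete_def by blast
  have close: "\<bar>f y - blinfun_apply y x0\<bar> < e" if y: "y \<in> Y" and "e > 0" for y e
  proof -
    let ?K = "(\<lambda>t. t *\<^sub>R y) ` {-1..1}"
    have K: "?K \<in> mackey_sets Y" and "y \<in> ?K"
      using mackey_sets_segment[OF Y y] by (auto intro: image_eqI[of _ _ 1])
    have "\<forall>\<^sub>F x in ?F. \<forall>z\<in>?K. \<bar>blinfun_apply z (x - x0)\<bar> < e / 2"
      using x0 K \<open>e > 0\<close> half_gt_zero unfolding mackey_converges_def by blast
    moreover have "\<forall>\<^sub>F x in ?F. \<forall>z\<in>?K. \<bar>f z - blinfun_apply z x\<bar> < e / 2"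
      using K \<open>e > 0\<close> by (intro eventually_mackey_approx_filter_approx[OF Y]) simp_all
    ultimately obtain x where "\<bar>blinfun_apply y (x - x0)\<bar> < e / 2" "\<bar>f y - blinfun_apply y x\<bar> < e / 2"
      using eventually_happens'[OF F eventually_conj] \<open>y \<in> ?K\<close> by blast
    then show ?thesis
      unfolding blinfun.diff_right by arith
  qed
  have "f y = blinfun_apply y x0" if "y \<in> Y" for y
    using close[OF that, of "\<bar>f y - blinfun_apply y x0\<bar>"] by fastforce
  then show ?thesis
    unfolding is_evaluation_on_def by blast
qed

section \<open>Sequential continuity versus continuity on Mackey sets\<close>

lemma weakstar_seq_continuous_on_minus:
  "weakstar_seq_continuous_on Y f \<Longrightarrow> weakstar_seq_continuous_on Y (\<lambda>y. - f y)"
  unfolding weakstar_seq_continuous_on_def by (auto intro: tendsto_minus)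

lemma closedin_weakstar_sublevel_set:
  fixes Y :: "('a::banach \<Rightarrow>\<^sub>L real) set"
  assumes E: "property_E' TYPE('a)" and K: "K \<in> mackey_sets Y"
    and lin: "linear_functional_on Y f" and seq: "weakstar_seq_continuous_on Y f"
  shows "closedin weakstar {y \<in> K. f y \<le> c}"
proof -
  let ?C = "{y \<in> K. f y \<le> c}"
  have KY: "K \<subseteq> Y"
    by (rule mackey_setsD(1)[OF K])
  have "convex ?C"
  proof (rule convexI)
    fix y z and u v :: real
    assume "y \<in> ?C" "z \<in> ?C" "0 \<le> u" "0 \<le> v" "u + v = 1"
    moreover from this have "u * f y + v * f z \<le> u * c + v * c"
      by (intro add_mono mult_left_mono) auto
    moreover have "f (u *\<^sub>R y + v *\<^sub>R z) = u * f y + v * f z"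
      using calculation KY by (intro linear_functional_onD[OF lin]) auto
    ultimately show "u *\<^sub>R y + v *\<^sub>R z \<in> ?C"
      using convexD[OF mackey_setsD(2)[OF K]] by (auto simp: distrib_right[symmetric])
  qed
  moreover have "bounded ?C"
    by (rule bounded_subset[OF bounded_mackey_sets[OF K]]) auto
  moreover have "weakstar_seq_closed ?C"
    unfolding weakstar_seq_closed_def
  proof (intro allI impI)
    fix s y assume s: "(\<forall>n. s n \<in> ?C) \<and> limitin weakstar s y sequentially"
    then have "y \<in> K"
      using limitin_closedin[OF _ closedin_weakstar_mackey_sets[OF K], of s y sequentially] by simp
    moreover have "limitin (subtopology weakstar Y) s y sequentially"
      using s \<open>y \<in> K\<close> KY by (auto simp: limitin_subtopology intro!: always_eventually)
    then have "(\<lambda>n. f (s n)) \<longlonglongrightarrow> f y"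
      using seq s \<open>y \<in> K\<close> KY unfolding weakstar_seq_continuous_on_def by blast
    then have "f y \<le> c"
      using s by (auto intro: tendsto_upperbound)
    ultimately show "y \<in> ?C"
      by simp
  qed
  ultimately show ?thesis
    using E unfolding property_E'_def by blast
qed

lemma continuous_on_mackey_sets_if_weakstar_seq_continuous:
  fixes Y :: "('a::banach \<Rightarrow>\<^sub>L real) set"
  assumes E: "property_E' TYPE('a)"
    and lin: "linear_functional_on Y f" and seq: "weakstar_seq_continuous_on Y f"
  shows "continuous_on_mackey_sets Y f"
  unfolding continuous_on_mackey_sets_def
proof
  fix K assume K: "K \<in> mackey_sets Y"
  have "closedin weakstar {y \<in> K. c \<le> f y}" for c
    using closedin_weakstar_sublevel_set[OF E K linear_functional_on_minus[OF lin]
        weakstar_seq_continuous_on_minus[OF seq], of "- c"] by simp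
  moreover have "closedin weakstar {y \<in> K. f y \<le> c}" for c
    by (rule closedin_weakstar_sublevel_set[OF E K lin seq])
  ultimately show "continuous_map (subtopology weakstar K) euclideanreal f"
    unfolding continuous_map_upper_lower_semicontinuous_le
    by (auto simp: closedin_subtopology_refl closedin_subset_topspace)
qed

(* Stated with partial sums, so that closedness in the product topology is immediate. *)
definition l1_unit_ball :: "(nat \<Rightarrow> real) set" where
  "l1_unit_ball = {a. \<forall>N. (\<Sum>n<N. \<bar>a n\<bar>) \<le> 1}"

lemma l1_unit_ball_summable:
  assumes "a \<in> l1_unit_ball"
  shows "summable (\<lambda>n. \<bar>a n\<bar>)" "(\<Sum>n. \<bar>a n\<bar>) \<le> 1"
proof -
  have bound: "(\<Sum>n<N. \<bar>a n\<bar>) \<le> 1" for N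
    using assms by (simp add: l1_unit_ball_def)
  then show summable: "summable (\<lambda>n. \<bar>a n\<bar>)"
    by (intro bounded_imp_summable[of _ 1]) (use bound[of "Suc _"] in \<open>simp_all add: lessThan_Suc_atMost[symmetric]\<close>)
  show "(\<Sum>n. \<bar>a n\<bar>) \<le> 1"
    by (rule suminf_le_const[OF summable bound])
qed

lemma l1_unit_ball_shift:
  assumes "a \<in> l1_unit_ball"
  shows "(\<lambda>n. a (n + k)) \<in> l1_unit_ball"
  unfolding l1_unit_ball_def
proof (intro CollectI allI)
  fix N
  have "(\<Sum>n<N. \<bar>a (n + k)\<bar>) = (\<Sum>n\<in>{k..<N + k}. \<bar>a n\<bar>)"
    using sum.shift_bounds_nat_ivl[of "\<lambda>n. \<bar>a n\<bar>" 0 k N] by (simp add: lessThan_atLeast0 add.commute)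
  also have "\<dots> \<le> (\<Sum>n<N + k. \<bar>a n\<bar>)"
    by (intro sum_mono2) auto
  also have "\<dots> \<le> 1"
    using assms by (simp add: l1_unit_ball_def)
  finally show "(\<Sum>n<N. \<bar>a (n + k)\<bar>) \<le> 1" .
qed

lemma l1_unit_ball_series_bound:
  assumes a: "a \<in> l1_unit_ball" and c: "\<And>n. \<bar>c n\<bar> \<le> r"
  shows "summable (\<lambda>n. a n * c n)" "\<bar>\<Sum>n. a n * c n\<bar> \<le> r"
proof -
  have r: "0 \<le> r"
    using c[of 0] by linarith
  have summable_a: "summable (\<lambda>n. \<bar>a n\<bar>)"
    by (rule l1_unit_ball_summable(1)[OF a])
  have le: "\<bar>a n * c n\<bar> \<le> r * \<bar>a n\<bar>" for n
    using mult_left_mono[OF c abs_ge_zero, of "a n"] by (simp add: abs_mult mult.commute)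
  have summable_abs: "summable (\<lambda>n. \<bar>a n * c n\<bar>)"
    by (rule summable_comparison_test'[OF summable_mult[OF summable_a, of r], of 0]) (use le in simp)
  then show "summable (\<lambda>n. a n * c n)"
    by (rule summable_rabs_cancel)
  have "\<bar>\<Sum>n. a n * c n\<bar> \<le> (\<Sum>n. \<bar>a n * c n\<bar>)"
    by (rule summable_rabs[OF summable_abs])
  also have "\<dots> \<le> (\<Sum>n. r * \<bar>a n\<bar>)"
    by (rule suminf_le[OF le summable_abs summable_mult[OF summable_a]])
  also have "\<dots> = r * (\<Sum>n. \<bar>a n\<bar>)"
    by (rule suminf_mult[OF summable_a])
  also have "\<dots> \<le> r"
    using l1_unit_ball_summable(2)[OF a] r by (simp add: mult_left_le)
  finally show "\<bar>\<Sum>n. a n * c n\<bar> \<le> r" .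
qed

lemma compactin_l1_unit_ball: "compactin (powertop_real UNIV) l1_unit_ball"
proof (rule closed_compactin)
  show "compactin (powertop_real UNIV) (PiE UNIV (\<lambda>_. {-1..1}))"
    by (simp add: compactin_PiE)
  have "\<bar>a n\<bar> \<le> 1" if "a \<in> l1_unit_ball" for a n
  proof -
    have "\<bar>a n\<bar> \<le> (\<Sum>k<Suc n. \<bar>a k\<bar>)"
      by (rule member_le_sum) auto
    also have "\<dots> \<le> 1"
      using that unfolding l1_unit_ball_def by blast
    finally show ?thesis .
  qed
  then show "l1_unit_ball \<subseteq> PiE UNIV (\<lambda>_. {-1..1})"
    by (auto simp: abs_le_iff)
  have "closedin (powertop_real UNIV) {a \<in> topspace (powertop_real UNIV). (\<Sum>n<N. \<bar>a n\<bar>) \<in> {..1}}" for N :: nat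
    by (intro closedin_continuous_map_preimage[where Y = euclideanreal] continuous_map_sum
        continuous_map_real_abs continuous_map_product_projection) auto
  then have "closedin (powertop_real UNIV) {a. (\<Sum>n<N. \<bar>a n\<bar>) \<le> 1}" for N :: nat
    by simp
  then show "closedin (powertop_real UNIV) l1_unit_ball"
    unfolding l1_unit_ball_def Collect_all_eq by (intro closedin_Inter) auto
qed

lemma continuous_map_l1_unit_ball_series:
  assumes w: "w \<longlonglongrightarrow> 0"
  shows "continuous_map (subtopology (powertop_real UNIV) l1_unit_ball) euclideanreal
           (\<lambda>a. \<Sum>n. a n * w n)"
proof (rule Met_TC.continuous_map_uniform_limit[where F = sequentially
      and f = "\<lambda>N a. \<Sum>n<N. a n * w n", simplified])
  show "\<forall>\<^sub>F N in sequentially. continuous_map (subtopology (powertop_real UNIV) l1_unit_ball) euclideanreal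
          (\<lambda>a. \<Sum>n<N. a n * w n)"
    by (intro always_eventually allI continuous_map_from_subtopology continuous_map_sum
        continuous_map_real_mult_right continuous_map_product_projection) auto
  obtain B where B: "\<And>n. \<bar>w n\<bar> \<le> B"
    using convergent_imp_Bseq[OF convergentI[OF w]] unfolding Bseq_def by auto
  fix e :: real assume "e > 0"
  then obtain N0 where N0: "\<forall>n\<ge>N0. \<bar>w n\<bar> < e / 2"
    using LIMSEQ_D[OF w, of "e / 2"] by auto
  have "dist (\<Sum>n<N. a n * w n) (\<Sum>n. a n * w n) < e" if "N \<ge> N0" "a \<in> l1_unit_ball" for N a
  proof -
    have "(\<Sum>n. a n * w n) = (\<Sum>n. a (n + N) * w (n + N)) + (\<Sum>n<N. a n * w n)"
      by (rule suminf_split_initial_segment[OF l1_unit_ball_series_bound(1)[OF that(2) B]])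
    moreover have "\<bar>\<Sum>n. a (n + N) * w (n + N)\<bar> \<le> e / 2"
      using that N0 by (intro l1_unit_ball_series_bound(2) l1_unit_ball_shift less_imp_le) auto
    ultimately show ?thesis
      using \<open>e > 0\<close> by (simp add: dist_real_def)
  qed
  then show "\<forall>\<^sub>F N in sequentially. \<forall>a\<in>topspace (subtopology (powertop_real UNIV) l1_unit_ball). dist (\<Sum>n<N. a n * w n) (\<Sum>n. a n * w n) < e"
    by (auto simp: eventually_sequentially)
qed

lemma l1_unit_ball_scale:
  assumes "a \<in> l1_unit_ball" "\<bar>t\<bar> \<le> 1"
  shows "(\<lambda>n. t * a n) \<in> l1_unit_ball"
  unfolding l1_unit_ball_def
proof (intro CollectI allI)
  fix N
  have "(\<Sum>n<N. \<bar>t * a n\<bar>) = \<bar>t\<bar> * (\<Sum>n<N. \<bar>a n\<bar>)"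
    by (simp add: abs_mult sum_distrib_left)
  also have "\<dots> \<le> 1"
    using assms by (intro mult_le_one) (auto simp: l1_unit_ball_def intro: sum_nonneg)
  finally show "(\<Sum>n<N. \<bar>t * a n\<bar>) \<le> 1" .
qed

lemma l1_unit_ball_convex_combination:
  assumes ab: "a \<in> l1_unit_ball" "b \<in> l1_unit_ball" and uv: "0 \<le> u" "0 \<le> v" "u + v = 1"
  shows "(\<lambda>n. u * a n + v * b n) \<in> l1_unit_ball"
  unfolding l1_unit_ball_def
proof (intro CollectI allI)
  fix N
  have "(\<Sum>n<N. \<bar>u * a n + v * b n\<bar>) \<le> (\<Sum>n<N. u * \<bar>a n\<bar> + v * \<bar>b n\<bar>)"
    using uv by (intro sum_mono order_trans[OF abs_triangle_ineq]) (simp add: abs_mult)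
  also have "\<dots> = u * (\<Sum>n<N. \<bar>a n\<bar>) + v * (\<Sum>n<N. \<bar>b n\<bar>)"
    by (simp add: sum.distrib sum_distrib_left)
  also have "\<dots> \<le> u * 1 + v * 1"
    using ab uv by (intro add_mono mult_left_mono) (auto simp: l1_unit_ball_def)
  finally show "(\<Sum>n<N. \<bar>u * a n + v * b n\<bar>) \<le> 1"
    using uv by simp
qed

lemma l1_unit_ball_indicator: "(\<lambda>m. if m = n then 1 else 0) \<in> l1_unit_ball"
  by (simp add: l1_unit_ball_def if_distrib[of abs] sum.delta cong: if_cong)

lemma summable_l1_series:
  fixes z :: "nat \<Rightarrow> 'b::banach"
  assumes a: "a \<in> l1_unit_ball" and M: "\<And>n. norm (z n) \<le> M"
  shows "summable (\<lambda>n. a n *\<^sub>R z n)"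
proof (rule summable_norm_cancel, rule summable_comparison_test')
  show "summable (\<lambda>n. M * \<bar>a n\<bar>)"
    by (rule summable_mult[OF l1_unit_ball_summable(1)[OF a]])
  show "norm (norm (a n *\<^sub>R z n)) \<le> M * \<bar>a n\<bar>" for n
    using mult_left_mono[OF M abs_ge_zero, of "a n"] by (simp add: mult.commute)
qed

lemma mackey_set_of_weakstar_null_sequence:
  fixes z :: "nat \<Rightarrow> ('a::banach \<Rightarrow>\<^sub>L real)"
  assumes Y: "subspace Y" "closed Y" and zY: "\<And>n. z n \<in> Y"
    and null: "\<And>x. (\<lambda>n. blinfun_apply (z n) x) \<longlonglongrightarrow> 0"
  shows "(\<lambda>a. \<Sum>n. a n *\<^sub>R z n) ` l1_unit_ball \<in> mackey_sets Y"
proof -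
  define T where "T a = (\<Sum>n. a n *\<^sub>R z n)" for a :: "nat \<Rightarrow> real"
  have "bounded (range z)"
    using convergent_imp_Bseq[OF convergentI[OF null]] unfolding Bseq_def
    by (intro bounded_if_pointwise_bounded) (metis real_norm_def rangeE)
  then obtain M where M: "\<And>n. norm (z n) \<le> M"
    unfolding bounded_iff by blast
  note summable = summable_l1_series[where z = z, OF _ M]
  have T_apply: "blinfun_apply (T a) x = (\<Sum>n. a n * blinfun_apply (z n) x)" if "a \<in> l1_unit_ball" for a x
    using bounded_linear.suminf[OF blinfun.bounded_linear_left summable[OF that]]
    by (simp add: T_def blinfun.scaleR_left)
  have T_Y: "T a \<in> Y" if "a \<in> l1_unit_ball" for a
  proof -
    have "\<forall>n. (\<Sum>i<n. a i *\<^sub>R z i) \<in> Y"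
      using Y(1) zY by (intro allI subspace_sum subspace_scale)
    then show ?thesis
      unfolding T_def using closed_sequentially[OF Y(2) _ summable_LIMSEQ[OF summable[OF that]]] by blast
  qed
  have T_combination: "T (\<lambda>n. u * a n + v * b n) = u *\<^sub>R T a + v *\<^sub>R T b"
    if "a \<in> l1_unit_ball" "b \<in> l1_unit_ball" for a b u v
    using suminf_add[OF summable_scaleR_right summable_scaleR_right, OF summable summable, OF that]
      suminf_scaleR_right[OF summable[OF that(1)], of u] suminf_scaleR_right[OF summable[OF that(2)], of v]
    by (simp add: T_def scaleR_add_left)
  have "continuous_map (subtopology (powertop_real UNIV) l1_unit_ball) weakstar T"
    unfolding continuous_map_weakstar_iff
    using continuous_map_eq[OF continuous_map_l1_unit_ball_series[OF null]] T_apply by auto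
  then have "compactin weakstar (T ` l1_unit_ball)"
    using compactin_l1_unit_ball by (intro image_compactin) (auto simp: compactin_subtopology)
  moreover have "convex (T ` l1_unit_ball)"
  proof (rule convexI)
    fix p q and u v :: real
    assume "p \<in> T ` l1_unit_ball" "q \<in> T ` l1_unit_ball" and uv: "0 \<le> u" "0 \<le> v" "u + v = 1"
    then obtain a b where ab: "a \<in> l1_unit_ball" "b \<in> l1_unit_ball" "p = T a" "q = T b"
      by blast
    then have "u *\<^sub>R p + v *\<^sub>R q = T (\<lambda>n. u * a n + v * b n)"
      using T_combination[OF ab(1,2)] by simp
    then show "u *\<^sub>R p + v *\<^sub>R q \<in> T ` l1_unit_ball"
      using l1_unit_ball_convex_combination[OF ab(1,2) uv] by blast
  qed
  moreover have "t *\<^sub>R p \<in> T ` l1_unit_ball" if t: "\<bar>t\<bar> \<le> 1" and p: "p \<in> T ` l1_unit_ball" for t p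
  proof -
    obtain a where a: "a \<in> l1_unit_ball" "p = T a"
      using p by blast
    then have "t *\<^sub>R p = T (\<lambda>n. t * a n)"
      using T_combination[OF a(1) a(1), of t 0] by simp
    then show ?thesis
      using l1_unit_ball_scale[OF a(1) t] by blast
  qed
  ultimately show ?thesis
    using T_Y unfolding T_def[abs_def] mackey_sets_def by (auto simp: compactin_subtopology)
qed

lemma weakstar_seq_continuous_if_continuous_on_mackey_sets:
  fixes Y :: "('a::banach \<Rightarrow>\<^sub>L real) set"
  assumes Y: "subspace Y" "closed Y"
    and lin: "linear_functional_on Y f" and cont: "continuous_on_mackey_sets Y f"
  shows "weakstar_seq_continuous_on Y f"
  unfolding weakstar_seq_continuous_on_def
proof (intro allI impI)
  fix s y assume "(\<forall>n. s n \<in> Y) \<and> y \<in> Y \<and> limitin (subtopology weakstar Y) s y sequentially"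
  then have sY: "\<And>n. s n \<in> Y" and y: "y \<in> Y" and lim: "limitin weakstar s y sequentially"
    by (auto simp: limitin_subtopology)
  define z where "z n = s n - y" for n
  have zY: "z n \<in> Y" for n
    using Y(1) sY y by (simp add: z_def subspace_diff)
  have null: "(\<lambda>n. blinfun_apply (z n) x) \<longlonglongrightarrow> 0" for x
    using tendsto_diff[OF lim[unfolded limitin_weakstar_iff, rule_format, of x] tendsto_const,
        of "blinfun_apply y x"]
    by (simp add: z_def blinfun.diff_left)
  define K where "K = (\<lambda>a. \<Sum>n. a n *\<^sub>R z n) ` l1_unit_ball"
  have K: "K \<in> mackey_sets Y"
    unfolding K_def by (rule mackey_set_of_weakstar_null_sequence[OF Y zY null])
  have zK: "z n \<in> K" for n
  proof -
    have "(\<Sum>m. (if m = n then 1 else 0) *\<^sub>R z m) = z n"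
      using sums_single[of n z] by (simp add: sums_iff if_distrib[of "\<lambda>c. c *\<^sub>R _"] cong: if_cong)
    then show ?thesis
      unfolding K_def by (rule image_eqI[OF sym l1_unit_ball_indicator])
  qed
  moreover have "0 \<in> K"
    using mackey_setsD(3)[OF K _ zK, of 0] by simp
  moreover have "limitin weakstar z 0 sequentially"
    using null by (simp add: limitin_weakstar_iff)
  ultimately have "limitin (subtopology weakstar K) z 0 sequentially"
    by (simp add: limitin_subtopology)
  with cont K have "limitin euclideanreal (f \<circ> z) (f 0) sequentially"
    unfolding continuous_on_mackey_sets_def by (blast intro: continuous_map_limit)
  then have "(\<lambda>n. f (z n)) \<longlonglongrightarrow> f 0"
    by (simp add: o_def)
  then have "(\<lambda>n. f (z n) + f y) \<longlonglongrightarrow> 0 + f y"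
    using linear_functional_on_zero[OF lin y] by (intro tendsto_add) auto
  moreover have "f (z n) + f y = f (s n)" for n
    using linear_functional_on_diff[OF lin sY y, of n] by (simp add: z_def)
  ultimately show "(\<lambda>n. f (s n)) \<longlonglongrightarrow> f y"
    by simp
qed

lemma mackey_complete_iff_mazur:
  fixes Y :: "('a::banach \<Rightarrow>\<^sub>L real) set"
  assumes E: "property_E' TYPE('a)" and Y: "subspace Y" "closed Y"
  shows "mackey_complete Y \<longleftrightarrow> mazur Y"
proof
  assume "mackey_complete Y"
  then show "mazur Y"
    unfolding mazur_iff_is_evaluation_on[OF Y(1)]
    using is_evaluation_on_if_mackey_complete[OF Y(1)]
      continuous_on_mackey_sets_if_weakstar_seq_continuous[OF E] by blast
next
  assume "mazur Y"
  then show "mackey_complete Y"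
    unfolding mazur_iff_is_evaluation_on[OF Y(1)]
    using mackey_complete_if_evaluations[OF Y(1)]
      weakstar_seq_continuous_if_continuous_on_mackey_sets[OF Y] by blast
qed

theorem corollary3p2:
  assumes "property_E' TYPE('a::banach)"
  shows "(\<forall>Y :: ('a \<Rightarrow>\<^sub>L real) set. subspace Y \<and> closed Y \<and> weakstar closure_of Y = UNIV
            \<longrightarrow> (mackey_complete Y \<longleftrightarrow> mazur Y))
       \<and> (fully_mackey_complete TYPE('a) \<longleftrightarrow> fully_mazur TYPE('a))"
  using mackey_complete_iff_mazur[OF assms]
  unfolding fully_mackey_complete_def fully_mazur_def by blast

end
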